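(* Let $\Lambda:[0,1]\to[0,\infty)$ be non-increasing, continuously differentiable on $[0,1]$, with second derivative $\Lambda''$ existing on $[0,1]$ and bounded in absolute value there, and set $Z=\int_0^1\Lambda(s)\,ds$ and $\Lambda_{\max}=\Lambda(0)$. For $n\ge1$ let $U_1,\dots,U_n$ be i.i.d. $\mathcal{U}(0,1)$ with order statistics $U_{(1)}\le\dots\le U_{(n)}$, and set $U_{(0)}\equiv 0$, $U_{(n+1)}\equiv 1$. Define \[ \hat Z_{QIS}=\frac12\sum_{i=1}^{n+1}\bigl(U_{(i)}-U_{(i-1)}\bigr)\bigl\{\Lambda(U_{(i-1)})+\Lambda(U_{(i)})\bigr\}. \] Then: (1) there is a constant $M$ (not depending on $n$) such that $\mathbb{E}\bigl[(Z-\hat Z_{QIS})^2\bigr]\le M/n^4$ for all $n\ge1$; (2) almost surely, \[ \sum_{i=1}^{n}\bigl(U_{(i)}-U_{(i-1)}\bigr)\Lambda(U_{(i)}) \;\le\; \hat Z_{QIS}\;\le\; \sum_{i=1}^{n}\bigl(U_{(i+1)}-U_{(i)}\bigr)\Lambda(U_{(i)}) + U_{(1)}\Lambda_{\max}. \]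
   Context: In the intended application, $Z=\int L\,dP$ is the evidence and $\Lambda$ is the pseudo-inverse of the survival function $Z(y)=P\{L({\bf X})>y\}$ of the likelihood ordinate, $\Lambda(s)=\sup\{y: Z(y)>s\}$, so that $Z=\int_0^1\Lambda(s)ds$; $\Lambda(0)$ corresponds to the maximum likelihood value $\Lambda_{\max}$. $\hat Z_{QIS}$ is the (trapezoidal) Quantile Importance Sampling estimator. *)

theory Defs
  imports "HOL-Probability.Probability"
begin

text \<open>Joint law of n i.i.d. U(0,1) variables U_1..U_n (indexed 0..n-1).\<close>
definition unif_sample :: "nat \<Rightarrow> (nat \<Rightarrow> real) measure" where
  "unif_sample n = PiM {..<n} (\<lambda>_. uniform_measure lborel {0..1::real})"

definition ordstat :: "nat \<Rightarrow> (nat \<Rightarrow> real) \<Rightarrow> nat \<Rightarrow> real" where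
  "ordstat n u i = (if i = 0 then 0 else if i = n + 1 then 1
                    else sort (map u [0..<n]) ! (i - 1))"

definition Z_QIS :: "(real \<Rightarrow> real) \<Rightarrow> nat \<Rightarrow> (nat \<Rightarrow> real) \<Rightarrow> real" where
  "Z_QIS \<Lambda> n u = 1/2 * (\<Sum>i=1..n+1. (ordstat n u i - ordstat n u (i - 1)) *
                         (\<Lambda> (ordstat n u (i - 1)) + \<Lambda> (ordstat n u i)))"

end

theory Submission
  imports Defs "HOL-Real_Asymp.Real_Asymp"
begin

text \<open>On a cell \<open>[a, b]\<close> of the partition by the order statistics the trapezoidal rule errs by at
  most \<open>B/2 (b - a)^3\<close>. Hence, for the spacings \<open>D\<^sub>i\<close>, Cauchy--Schwarz and \<open>\<Sum> D\<^sub>i = 1\<close> give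
  \<open>(Z - Z_QIS)^2 \<le> B^2/4 \<Sum> D\<^sub>i^5\<close>. Every nonzero spacing is either \<open>U\<^sub>(\<^sub>1\<^sub>)\<close> or the gap from
  some \<open>U\<^sub>j\<close> to the next larger sample point (or to 1), so there are at most \<open>n + 1\<close> quantities to
  control. Bounding \<open>x^5\<close> by \<open>(\<lceil>n x\<rceil>/n)^5 = n^-5 \<Sum>\<^sub>k ((k+1)^5 - k^5) [k/n < x]\<close> reduces their
  fifth moments to the tail probabilities \<open>P(gap > k/n) \<le> (1 - (k-1)/n)^(n-1) \<le> e^(-(k-1)/2)\<close>,
  and \<open>\<Sum>\<^sub>k ((k+1)^5 - k^5) e^(-(k-1)/2) < \<infinity>\<close>; so each fifth moment is \<open>O(n^-5)\<close> and
  \<open>E (Z - Z_QIS)^2 = O(n^-4)\<close>. The almost sure bounds hold pointwise because \<open>\<Lambda>\<close> is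
  non-increasing: each trapezoid lies between the rectangles over its two endpoints.\<close>

section \<open>The trapezoidal rule for functions with bounded second derivative\<close>

locale bounded_second_derivative =
  fixes \<Lambda> \<Lambda>' \<Lambda>'' :: "real \<Rightarrow> real" and B :: real
  assumes has_derivative_1: "\<forall>s\<in>{0..1}. (\<Lambda> has_real_derivative \<Lambda>' s) (at s within {0..1})"
    and has_derivative_2: "\<forall>s\<in>{0..1}. (\<Lambda>' has_real_derivative \<Lambda>'' s) (at s within {0..1})"
    and derivative_2_bounded: "\<forall>s\<in>{0..1}. \<bar>\<Lambda>'' s\<bar> \<le> B"
begin

lemma continuous_on_01: "continuous_on {0..1} \<Lambda>"
  using has_derivative_1 by (intro DERIV_continuous_on) auto

lemma bound_nonneg: "0 \<le> B"
  using derivative_2_bounded abs_ge_zero[of "\<Lambda>'' 0"] by force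

lemma derivative_lipschitz:
  assumes "x \<in> {0..1}" "y \<in> {0..1}"
  shows "\<bar>\<Lambda>' x - \<Lambda>' y\<bar> \<le> B * \<bar>x - y\<bar>"
  using field_differentiable_bound[of "{0..1}" \<Lambda>' \<Lambda>'' B x y]
    has_derivative_2 derivative_2_bounded assms by auto

lemma has_derivative_1_within:
  assumes "{a..b} \<subseteq> {0..1}" "z \<in> {a..b}"
  shows "(\<Lambda> has_real_derivative \<Lambda>' z) (at z within {a..b})"
  using has_derivative_1 assms by (blast intro: DERIV_subset)

lemma tangent_error:
  assumes "0 \<le> a" "a \<le> t" "t \<le> 1"
  shows "\<bar>\<Lambda> t - \<Lambda> a - (t - a) * \<Lambda>' t\<bar> \<le> B * (t - a)^2"
proof -
  let ?g = "\<lambda>s. \<Lambda> s - s * \<Lambda>' t"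
  have "norm (?g t - ?g a) \<le> (B * (t - a)) * norm (t - a)"
  proof (rule field_differentiable_bound[of "{a..t}" _ "\<lambda>s. \<Lambda>' s - \<Lambda>' t"])
    fix z assume z: "z \<in> {a..t}"
    show "(?g has_field_derivative \<Lambda>' z - \<Lambda>' t) (at z within {a..t})"
      using assms z by (intro DERIV_diff has_derivative_1_within DERIV_cmult_right[OF DERIV_ident, simplified]) auto
    have "\<bar>\<Lambda>' z - \<Lambda>' t\<bar> \<le> B * \<bar>z - t\<bar>"
      using assms z by (intro derivative_lipschitz) auto
    also have "\<dots> \<le> B * (t - a)"
      using z bound_nonneg by (intro mult_left_mono) auto
    finally show "norm (\<Lambda>' z - \<Lambda>' t) \<le> B * (t - a)" by simp
  qed (use assms in simp_all)
  then show ?thesis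
    using assms by (simp add: algebra_simps power2_eq_square)
qed

lemma trapezoid_error:
  assumes "0 \<le> a" "a \<le> b" "b \<le> 1"
  shows "\<bar>integral {a..b} \<Lambda> - (b - a) * (\<Lambda> a + \<Lambda> b) / 2\<bar> \<le> B / 2 * (b - a)^3"
proof -
  define F where "F t = integral {a..t} \<Lambda> - (t - a) * (\<Lambda> a + \<Lambda> t) / 2" for t
  have "norm (F b - F a) \<le> (B / 2 * (b - a)^2) * norm (b - a)"
  proof (rule field_differentiable_bound[of "{a..b}" _ "\<lambda>t. (\<Lambda> t - \<Lambda> a - (t - a) * \<Lambda>' t) / 2"])
    fix z assume z: "z \<in> {a..b}"
    have sub: "{a..b} \<subseteq> {0..1}" using assms by auto
    have "((\<lambda>t. integral {a..t} \<Lambda>) has_real_derivative \<Lambda> z) (at z within {a..b})"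
      using integral_has_vector_derivative[OF continuous_on_subset[OF continuous_on_01 sub] z]
      by (simp add: has_real_derivative_iff_has_vector_derivative)
    moreover have "((\<lambda>t. (t - a) * (\<Lambda> a + \<Lambda> t) / 2) has_real_derivative
        ((\<Lambda> a + \<Lambda> z) + (z - a) * \<Lambda>' z) / 2) (at z within {a..b})"
      using DERIV_cdivide[OF DERIV_mult'[OF DERIV_diff[OF DERIV_ident DERIV_const[of a]]
          DERIV_add[OF DERIV_const[of "\<Lambda> a"] has_derivative_1_within[OF sub z]]], of 2]
      by (simp add: add.commute)
    ultimately have "(F has_real_derivative \<Lambda> z - ((\<Lambda> a + \<Lambda> z) + (z - a) * \<Lambda>' z) / 2) (at z within {a..b})"
      unfolding F_def by (rule DERIV_diff)
    then show "(F has_field_derivative (\<Lambda> z - \<Lambda> a - (z - a) * \<Lambda>' z) / 2) (at z within {a..b})"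
      by (rule DERIV_cong) (simp add: field_simps)
    have "\<bar>\<Lambda> z - \<Lambda> a - (z - a) * \<Lambda>' z\<bar> \<le> B * (z - a)^2"
      using z assms by (intro tangent_error) auto
    also have "\<dots> \<le> B * (b - a)^2"
      using z bound_nonneg by (intro mult_left_mono power_mono) auto
    finally show "norm ((\<Lambda> z - \<Lambda> a - (z - a) * \<Lambda>' z) / 2) \<le> B / 2 * (b - a)^2" by simp
  qed (use assms in simp_all)
  then show ?thesis
    using assms by (simp add: F_def power3_eq_cube power2_eq_square)
qed

lemma integral_partition:
  fixes y :: "nat \<Rightarrow> real"
  assumes "y 0 = 0" and "\<And>i j. i \<le> j \<Longrightarrow> j \<le> m \<Longrightarrow> y i \<le> y j" and "y m \<le> 1" and "k \<le> m"
  shows "integral {0..y k} \<Lambda> = (\<Sum>i=1..k. integral {y (i - 1)..y i} \<Lambda>)"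
  using \<open>k \<le> m\<close>
proof (induction k)
  case 0
  then show ?case using assms(1) by simp
next
  case (Suc k)
  have "0 \<le> y k" "y k \<le> y (Suc k)" "y (Suc k) \<le> 1"
    using assms(1,3) assms(2)[of 0 k] assms(2)[of k "Suc k"] assms(2)[of "Suc k" m] Suc.prems
    by auto
  then have "integral {0..y k} \<Lambda> + integral {y k..y (Suc k)} \<Lambda> = integral {0..y (Suc k)} \<Lambda>"
    by (intro Henstock_Kurzweil_Integration.integral_combine integrable_continuous_real
        continuous_on_subset[OF continuous_on_01]) auto
  with Suc show ?case by simp
qed

lemma trapezoid_error_partition:
  fixes y :: "nat \<Rightarrow> real"
  assumes y0: "y 0 = 0" and ym: "y m = 1" and mono: "\<And>i j. i \<le> j \<Longrightarrow> j \<le> m \<Longrightarrow> y i \<le> y j"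
  shows "\<bar>integral {0..1} \<Lambda> - 1/2 * (\<Sum>i=1..m. (y i - y (i - 1)) * (\<Lambda> (y (i - 1)) + \<Lambda> (y i)))\<bar>
           \<le> B / 2 * (\<Sum>i=1..m. (y i - y (i - 1))^3)"
proof -
  let ?T = "\<lambda>i. (y i - y (i - 1)) * (\<Lambda> (y (i - 1)) + \<Lambda> (y i)) / 2"
  have "integral {0..1} \<Lambda> - 1/2 * (\<Sum>i=1..m. (y i - y (i - 1)) * (\<Lambda> (y (i - 1)) + \<Lambda> (y i)))
      = (\<Sum>i=1..m. integral {y (i - 1)..y i} \<Lambda> - ?T i)" (is "?err = _")
    using integral_partition[of y m m] y0 mono ym
    by (simp only: sum_subtractf sum_divide_distrib[symmetric])
  then have "\<bar>?err\<bar> \<le> (\<Sum>i=1..m. \<bar>integral {y (i - 1)..y i} \<Lambda> - ?T i\<bar>)"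
    by (simp only: sum_abs)
  also have "\<dots> \<le> (\<Sum>i=1..m. B / 2 * (y i - y (i - 1))^3)"
  proof (rule sum_mono)
    fix i assume "i \<in> {1..m}"
    then have "0 \<le> y (i - 1)" "y (i - 1) \<le> y i" "y i \<le> 1"
      using mono[of 0 "i - 1"] mono[of "i - 1" i] mono[of i m] y0 ym by auto
    then show "\<bar>integral {y (i - 1)..y i} \<Lambda> - ?T i\<bar> \<le> B / 2 * (y i - y (i - 1))^3"
      by (rule trapezoid_error)
  qed
  also have "\<dots> = B / 2 * (\<Sum>i=1..m. (y i - y (i - 1))^3)"
    by (rule sum_distrib_left[symmetric])
  finally show ?thesis .
qed

end

section \<open>Order statistics and spacings\<close>

definition right_gap :: "nat \<Rightarrow> (nat \<Rightarrow> real) \<Rightarrow> nat \<Rightarrow> real" where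
  "right_gap n u j = Min (insert 1 {u k | k. k < n \<and> u j < u k}) - u j"

context
  fixes n :: nat and u :: "nat \<Rightarrow> real"
begin

lemma ordstat_eq_nth: "1 \<le> i \<Longrightarrow> i \<le> n \<Longrightarrow> ordstat n u i = sort (map u [0..<n]) ! (i - 1)"
  by (simp add: ordstat_def)

lemma sample_eq_sorted_nth: "k < n \<Longrightarrow> \<exists>m<n. u k = sort (map u [0..<n]) ! m"
proof -
  assume "k < n"
  then have "u k \<in> set (sort (map u [0..<n]))" by simp
  then show ?thesis by (metis in_set_conv_nth length_map length_sort length_upt minus_nat.diff_0)
qed

lemma ordstat_in_sample:
  assumes "1 \<le> i" "i \<le> n"
  shows "\<exists>j<n. u j = ordstat n u i"
proof -
  have "sort (map u [0..<n]) ! (i - 1) \<in> set (sort (map u [0..<n]))"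
    using assms by (intro nth_mem) simp
  then show ?thesis using ordstat_eq_nth[OF assms] by force
qed

lemma ordstat_1_le_sample: "k < n \<Longrightarrow> ordstat n u 1 \<le> u k"
  using sample_eq_sorted_nth[of k] by (auto simp: ordstat_eq_nth sorted_nth_mono)

lemma ordstat_Suc_le_sample:
  assumes "1 \<le> i" "i \<le> n" "k < n" "ordstat n u i < u k"
  shows "ordstat n u (i + 1) \<le> u k"
proof -
  let ?xs = "sort (map u [0..<n])"
  obtain m where m: "m < n" "u k = ?xs ! m" using sample_eq_sorted_nth assms by blast
  have "\<not> m \<le> i - 1"
  proof
    assume "m \<le> i - 1"
    then have "?xs ! m \<le> ?xs ! (i - 1)" using assms by (intro sorted_nth_mono) auto
    then show False using assms m ordstat_eq_nth by simp
  qed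
  then have "i < n" "?xs ! i \<le> ?xs ! m" using m assms by (auto intro: sorted_nth_mono)
  then show ?thesis using m assms by (simp add: ordstat_eq_nth)
qed

lemma sum_spacings: "(\<Sum>i=1..n+1. ordstat n u i - ordstat n u (i - 1)) = 1"
proof -
  have "(\<Sum>i=1..n+1. ordstat n u i - ordstat n u (i - 1)) = (\<Sum>i=Suc 0..Suc n. ordstat n u i - ordstat n u (i - 1))"
    by simp
  also have "\<dots> = (\<Sum>i=0..n. ordstat n u (Suc i) - ordstat n u i)"
    by (subst sum.shift_bounds_cl_Suc_ivl) simp
  also have "\<dots> = 1" by (subst sum_Suc_diff) (simp_all add: ordstat_def)
  finally show ?thesis .
qed

lemma finite_larger_samples: "finite {u k | k. k < n \<and> u j < u k}"
  by (rule finite_subset[of _ "u ` {..<n}"]) auto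

lemma right_gap_le: "right_gap n u j \<le> 1 - u j"
  using finite_larger_samples by (simp add: right_gap_def Min_le_iff)

lemma right_gap_le_gap: "k < n \<Longrightarrow> u j < u k \<Longrightarrow> right_gap n u j \<le> u k - u j"
  using finite_larger_samples by (auto simp: right_gap_def Min_le_iff)

lemma right_gap_ge:
  assumes "c \<le> 1" "\<And>k. k < n \<Longrightarrow> u j < u k \<Longrightarrow> c \<le> u k"
  shows "c - u j \<le> right_gap n u j"
proof -
  have "c \<le> Min (insert 1 {u k | k. k < n \<and> u j < u k})"
    using assms finite_larger_samples[of j] by (subst Min_ge_iff) auto
  then show ?thesis by (simp add: right_gap_def)
qed

context
  assumes sample_01: "\<forall>i<n. u i \<in> {0..1}"
begin

lemma ordstat_range:
  assumes "i \<le> n + 1"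
  shows "0 \<le> ordstat n u i \<and> ordstat n u i \<le> 1"
proof (cases "i = 0 \<or> i = n + 1")
  case True then show ?thesis by (auto simp: ordstat_def)
next
  case False
  then obtain j where "j < n" "u j = ordstat n u i" using ordstat_in_sample[of i] assms by force
  then show ?thesis using sample_01 by force
qed

lemma ordstat_mono:
  assumes "i \<le> j" "j \<le> n + 1"
  shows "ordstat n u i \<le> ordstat n u j"
proof -
  consider "i = 0" | "j = n + 1" | "1 \<le> i" "j \<le> n" using assms by linarith
  then show ?thesis
  proof cases
    case 1 then show ?thesis using ordstat_range[of j] assms by (simp add: ordstat_def)
  next
    case 2 then show ?thesis using ordstat_range[of i] assms by (simp add: ordstat_def)
  next
    case 3 then show ?thesis using assms by (simp add: ordstat_eq_nth sorted_nth_mono)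
  qed
qed

lemma right_gap_nonneg:
  assumes "j < n"
  shows "0 \<le> right_gap n u j"
proof -
  have "u j \<le> Min (insert 1 {u k | k. k < n \<and> u j < u k})"
    using sample_01 assms finite_larger_samples[of j] by (subst Min_ge_iff) auto
  then show ?thesis by (simp add: right_gap_def)
qed

lemma ordstat_spacing_le_right_gap:
  assumes "i \<in> {1..n}" "j < n" "u j = ordstat n u i"
  shows "ordstat n u (i + 1) - ordstat n u i \<le> right_gap n u j"
proof -
  have "ordstat n u (i + 1) - u j \<le> right_gap n u j"
    using assms ordstat_range[of "i + 1"] ordstat_Suc_le_sample[of i]
    by (intro right_gap_ge) auto
  then show ?thesis using assms by simp
qed

lemma ordstat_strict_step_unique:
  assumes "i \<in> {1..n}" "i' \<in> {1..n}" "ordstat n u i < ordstat n u (i + 1)"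
    "ordstat n u i' < ordstat n u (i' + 1)" "ordstat n u i = ordstat n u i'"
  shows "i = i'"
proof (rule ccontr)
  assume "i \<noteq> i'"
  then consider "i + 1 \<le> i'" | "i' + 1 \<le> i" by linarith
  then show False
  proof cases
    case 1
    then have "ordstat n u (i + 1) \<le> ordstat n u i'" using assms(2) by (intro ordstat_mono) auto
    then show False using assms(3,5) by linarith
  next
    case 2
    then have "ordstat n u (i' + 1) \<le> ordstat n u i" using assms(1) by (intro ordstat_mono) auto
    then show False using assms(4,5) by linarith
  qed
qed

text \<open>Each strict step of the order statistics is charged to a distinct sample point.\<close>

lemma sum_spacings_pow5_le_right_gaps:
  "(\<Sum>i=1..n. (ordstat n u (i + 1) - ordstat n u i)^5) \<le> (\<Sum>j<n. right_gap n u j ^ 5)"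
proof -
  let ?y = "ordstat n u"
  define P where "P = {i\<in>{1..n}. ?y i < ?y (i + 1)}"
  define J where "J i = (SOME j. j < n \<and> u j = ?y i)" for i
  have J: "J i < n \<and> u (J i) = ?y i" if "i \<in> {1..n}" for i
  proof -
    have "\<exists>j. j < n \<and> u j = ?y i" using ordstat_in_sample[of i] that by simp
    then show ?thesis unfolding J_def by (rule someI_ex)
  qed
  have step_nonneg: "0 \<le> ?y (i + 1) - ?y i" if "i \<in> {1..n}" for i
    using ordstat_mono[of i "i + 1"] that by simp
  have "(\<Sum>i=1..n. (?y (i + 1) - ?y i)^5) = (\<Sum>i\<in>P. (?y (i + 1) - ?y i)^5)"
  proof (rule sum.mono_neutral_right)
    show "\<forall>i\<in>{1..n} - P. (?y (i + 1) - ?y i)^5 = 0"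
    proof
      fix i assume i: "i \<in> {1..n} - P"
      then have "\<not> ?y i < ?y (i + 1)" "i \<in> {1..n}" unfolding P_def by blast+
      then have "?y (i + 1) = ?y i" using step_nonneg[of i] by linarith
      then show "(?y (i + 1) - ?y i)^5 = 0" by simp
    qed
  qed (auto simp: P_def)
  also have "\<dots> \<le> (\<Sum>i\<in>P. right_gap n u (J i) ^ 5)"
  proof (rule sum_mono)
    fix i assume "i \<in> P"
    then have i: "i \<in> {1..n}" by (simp add: P_def)
    show "(?y (i + 1) - ?y i)^5 \<le> right_gap n u (J i) ^ 5"
      using J[OF i] step_nonneg[OF i] ordstat_spacing_le_right_gap[OF i] by (intro power_mono) auto
  qed
  also have "\<dots> = (\<Sum>j\<in>J ` P. right_gap n u j ^ 5)"
  proof -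
    have "inj_on J P"
    proof (rule inj_onI)
      fix i i' assume "i \<in> P" "i' \<in> P" "J i = J i'"
      then show "i = i'"
        using J[of i] J[of i'] unfolding P_def by (intro ordstat_strict_step_unique) auto
    qed
    from sum.reindex[OF this, of "\<lambda>j. right_gap n u j ^ 5"] show ?thesis by (simp add: comp_def)
  qed
  also have "\<dots> \<le> (\<Sum>j<n. right_gap n u j ^ 5)"
  proof (rule sum_mono2)
    show "J ` P \<subseteq> {..<n}" using J unfolding P_def by auto
    show "0 \<le> right_gap n u j ^ 5" if "j \<in> {..<n} - J ` P" for j
      using right_gap_nonneg[of j] that by simp
  qed simp
  finally show ?thesis .
qed

lemma sum_spacings_pow5_le:
  "(\<Sum>i=1..n+1. (ordstat n u i - ordstat n u (i - 1))^5)
     \<le> ordstat n u 1 ^ 5 + (\<Sum>j<n. right_gap n u j ^ 5)"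
proof -
  have "(\<Sum>i=1..n+1. (ordstat n u i - ordstat n u (i - 1))^5)
      = (ordstat n u 1 - ordstat n u 0)^5 + (\<Sum>i=Suc 1..Suc n. (ordstat n u i - ordstat n u (i - 1))^5)"
    by (subst sum.atLeast_Suc_atMost) simp_all
  also have "(\<Sum>i=Suc 1..Suc n. (ordstat n u i - ordstat n u (i - 1))^5)
      = (\<Sum>i=1..n. (ordstat n u (i + 1) - ordstat n u i)^5)"
    by (subst sum.shift_bounds_cl_Suc_ivl) simp
  finally show ?thesis
    using sum_spacings_pow5_le_right_gaps by (simp add: ordstat_def)
qed

end

end

section \<open>Fifth powers of the spacings\<close>

lemma sum_cube_squared_le_sum_pow5:
  fixes d :: "nat \<Rightarrow> real"
  assumes "\<And>i. i \<in> I \<Longrightarrow> 0 \<le> d i" "(\<Sum>i\<in>I. d i) = 1"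
  shows "(\<Sum>i\<in>I. d i ^ 3)^2 \<le> (\<Sum>i\<in>I. d i ^ 5)"
proof -
  have "(\<Sum>i\<in>I. sqrt (d i) * (sqrt (d i) * d i ^ 2))^2
     \<le> (\<Sum>i\<in>I. (sqrt (d i))^2) * (\<Sum>i\<in>I. (sqrt (d i) * d i ^ 2)^2)"
    by (rule Cauchy_Schwarz_ineq_sum)
  moreover have "(\<Sum>i\<in>I. sqrt (d i) * (sqrt (d i) * d i ^ 2)) = (\<Sum>i\<in>I. d i ^ 3)"
  proof (rule sum.cong)
    fix i assume "i \<in> I"
    then have "sqrt (d i) * sqrt (d i) = d i" using assms(1) by simp
    then show "sqrt (d i) * (sqrt (d i) * d i ^ 2) = d i ^ 3"
      by (simp add: power2_eq_square power3_eq_cube mult.assoc[symmetric])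
  qed simp
  moreover have "(\<Sum>i\<in>I. (sqrt (d i))^2) = 1" using assms by simp
  moreover have "(\<Sum>i\<in>I. (sqrt (d i) * d i ^ 2)^2) = (\<Sum>i\<in>I. d i ^ 5)"
  proof (rule sum.cong)
    fix i assume "i \<in> I"
    then have "(sqrt (d i))^2 = d i" using assms(1) by simp
    then show "(sqrt (d i) * d i ^ 2)^2 = d i ^ 5"
      by (simp add: power_mult_distrib power2_eq_square eval_nat_numeral)
  qed simp
  ultimately show ?thesis by simp
qed

definition pow5_increment :: "nat \<Rightarrow> real" where
  "pow5_increment k = (real k + 1)^5 - real k ^ 5"

lemma pow5_increment_nonneg: "0 \<le> pow5_increment k"
  unfolding pow5_increment_def by (simp add: power_mono)

lemma pow5_increment_0 [simp]: "pow5_increment 0 = 1"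
  by (simp add: pow5_increment_def)

text \<open>The right-hand side telescopes to \<open>(\<lceil>n x\<rceil> / n)^5\<close>; it is linear in the indicators
  of the events \<open>k/n < x\<close>, which is what makes the fifth moment computable.\<close>

lemma pow5_le_sum_increments:
  assumes "0 \<le> x" "x \<le> 1" "1 \<le> n"
  shows "x ^ 5 \<le> (1 / real n)^5 * (\<Sum>k<n. pow5_increment k * (if real k / real n < x then 1 else 0))"
proof -
  define m where "m = nat \<lceil>x * real n\<rceil>"
  have np: "0 < real n" using assms by simp
  have "0 \<le> x * real n" using assms by simp
  then have c0: "0 \<le> \<lceil>x * real n\<rceil>" by simp
  have xm: "x * real n \<le> real m" unfolding m_def
    using le_of_int_ceiling[of "x * real n"] c0 by simp
  have mn: "m \<le> n" unfolding m_def using assms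
    by (simp add: nat_le_iff ceiling_le_iff mult_left_le_one_le)
  have below: "{k \<in> {..<n}. real k / real n < x} = {..<m}"
  proof (intro set_eqI iffI)
    fix k assume "k \<in> {k \<in> {..<n}. real k / real n < x}"
    then have "real k < x * real n" using np by (simp add: divide_less_eq)
    then have "int k < \<lceil>x * real n\<rceil>" by (simp add: less_ceiling_iff)
    then show "k \<in> {..<m}" unfolding m_def by simp
  next
    fix k assume k: "k \<in> {..<m}"
    then have "int k < \<lceil>x * real n\<rceil>" unfolding m_def by simp
    then have "real k < x * real n" by (simp add: less_ceiling_iff)
    then show "k \<in> {k \<in> {..<n}. real k / real n < x}" using np k mn by (simp add: divide_less_eq)
  qed
  have "(\<Sum>k<n. pow5_increment k * (if real k / real n < x then 1 else 0))
      = (\<Sum>k<n. if real k / real n < x then pow5_increment k else 0)"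
    by (rule sum.cong) simp_all
  also have "\<dots> = sum pow5_increment {k \<in> {..<n}. real k / real n < x}"
    by (rule sum.inter_filter[symmetric]) simp
  also have "\<dots> = (\<Sum>k<m. real (Suc k) ^ 5 - real k ^ 5)"
    unfolding below pow5_increment_def by (simp add: add.commute)
  also have "\<dots> = real m ^ 5" by (subst sum_lessThan_telescope) simp
  finally have sum_eq: "(\<Sum>k<n. pow5_increment k * (if real k / real n < x then 1 else 0)) = real m ^ 5" .
  have "x ^ 5 \<le> (real m / real n) ^ 5"
    using xm np assms by (intro power_mono) (simp_all add: le_divide_eq)
  then show ?thesis unfolding sum_eq by (simp add: power_divide)
qed

lemma one_minus_pow_le_exp:
  assumes "1 \<le> k" "k < n"
  shows "(1 - (real k - 1) / real n) ^ (n - 1) \<le> exp (- (real k - 1) / 2)"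
proof -
  define t where "t = (real k - 1) / real n"
  have np: "0 < real n" using assms by simp
  have "(1 - t) ^ (n - 1) \<le> exp (- t) ^ (n - 1)"
    using assms np exp_ge_add_one_self[of "- t"] unfolding t_def
    by (intro power_mono) (simp_all add: field_simps)
  also have "\<dots> = exp (real (n - 1) * (- t))"
    by (rule exp_of_nat_mult[symmetric])
  also have "\<dots> \<le> exp (- (real k - 1) / 2)"
  proof (subst exp_le_cancel_iff)
    have "(real k - 1) * real n \<le> (real k - 1) * (2 * real (n - 1))"
      using assms by (intro mult_left_mono) auto
    then show "real (n - 1) * (- t) \<le> - (real k - 1) / 2"
      using np unfolding t_def by (simp add: field_simps)
  qed
  finally show ?thesis unfolding t_def .
qed

definition tail_weight :: "nat \<Rightarrow> real" where
  "tail_weight n = (\<Sum>k\<in>{1..<n}. pow5_increment k * (1 - (real k - 1) / real n) ^ (n - 1))"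

lemma tail_weight_nonneg: "0 \<le> tail_weight n"
  unfolding tail_weight_def using pow5_increment_nonneg
  by (intro sum_nonneg mult_nonneg_nonneg) (auto simp: field_simps)

lemma tail_weight_bounded: "\<exists>K. \<forall>n. tail_weight n \<le> K"
proof -
  let ?f = "\<lambda>k. pow5_increment k * exp (- (real k - 1) / 2)"
  have f_nonneg: "0 \<le> ?f k" for k using pow5_increment_nonneg[of k] by simp
  have "summable ?f"
  proof (rule summable_comparison_test_bigo)
    have "(\<lambda>k::nat. exp (- real k / 4)) = (\<lambda>k. exp (-1/4) ^ k)"
      by (auto simp: exp_of_nat_mult[symmetric] field_simps)
    then show "summable (\<lambda>k. norm (exp (- real k / 4)))" by simp
    show "?f \<in> O(\<lambda>k. exp (- real k / 4))"
      unfolding pow5_increment_def by real_asymp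
  qed
  have "tail_weight n \<le> suminf ?f" for n
  proof -
    have "tail_weight n \<le> (\<Sum>k\<in>{1..<n}. ?f k)"
      unfolding tail_weight_def using one_minus_pow_le_exp pow5_increment_nonneg
      by (intro sum_mono mult_left_mono) auto
    also have "\<dots> \<le> suminf ?f"
      using \<open>summable ?f\<close> f_nonneg by (intro sum_le_suminf) auto
    finally show ?thesis .
  qed
  then show ?thesis by blast
qed

section \<open>Events of the uniform sample\<close>

lemma prob_space_unif_sample: "prob_space (unif_sample n)"
  unfolding unif_sample_def by (intro prob_space_PiM prob_space_uniform_measure) auto

interpretation unif_01: product_sigma_finite "\<lambda>_::nat. uniform_measure lborel {0..1::real}"
  unfolding product_sigma_finite_def
  by (auto intro!: prob_space_imp_sigma_finite prob_space_uniform_measure)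

lemma space_unif_sample: "space (unif_sample n) = PiE {..<n} (\<lambda>_. UNIV)"
  by (simp add: unif_sample_def space_PiM)

lemma measure_unif_sample_PiE:
  assumes "\<And>i. i < n \<Longrightarrow> A i \<in> sets borel"
  shows "measure (unif_sample n) (PiE {..<n} A) = (\<Prod>i<n. measure lborel (A i \<inter> {0..1}))"
proof -
  have fin: "emeasure lborel (A i \<inter> {0..1}) \<noteq> \<top>" for i
  proof -
    have "emeasure lborel (A i \<inter> {0..1}) \<le> emeasure lborel {0..1::real}"
      by (rule emeasure_mono) auto
    then show ?thesis by (auto simp: top_unique)
  qed
  have "emeasure (unif_sample n) (PiE {..<n} A)
      = (\<Prod>i<n. emeasure (uniform_measure lborel {0..1}) (A i))"
    unfolding unif_sample_def by (rule unif_01.emeasure_PiM) (use assms in auto)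
  also have "\<dots> = (\<Prod>i<n. ennreal (measure lborel (A i \<inter> {0..1})))"
    using assms fin
    by (intro prod.cong refl)
      (simp add: emeasure_uniform_measure Int_commute divide_ennreal_def emeasure_eq_ennreal_measure)
  also have "\<dots> = ennreal (\<Prod>i<n. measure lborel (A i \<inter> {0..1}))"
    by (simp add: prod_ennreal)
  finally show ?thesis
    by (simp add: Sigma_Algebra.measure_def prod_nonneg)
qed

lemma AE_unif_sample_01: "AE u in unif_sample n. \<forall>i<n. u i \<in> {0..1}"
proof -
  interpret prob_space "unif_sample n" by (rule prob_space_unif_sample)
  have "measure (unif_sample n) (PiE {..<n} (\<lambda>_. {0..1::real})) = 1"
    by (subst measure_unif_sample_PiE) simp_all
  then have "AE u in unif_sample n. u \<in> PiE {..<n} (\<lambda>_. {0..1::real})"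
    by (rule AE_prob_1)
  then show ?thesis by eventually_elim (simp add: PiE_iff)
qed

definition above_event :: "nat \<Rightarrow> nat \<Rightarrow> (nat \<Rightarrow> real) set" where
  "above_event n k = PiE {..<n} (\<lambda>_. {real k / real n <..})"

text \<open>\<open>u j\<close> lies in the \<open>a\<close>-th grid cell of width \<open>1/n\<close> and no other sample point lies in
  \<open>((a+1)/n, (a+k)/n]\<close>: this happens whenever the right gap at \<open>u j\<close> exceeds \<open>k/n\<close>.\<close>

definition gap_event :: "nat \<Rightarrow> nat \<Rightarrow> nat \<Rightarrow> nat \<Rightarrow> (nat \<Rightarrow> real) set" where
  "gap_event n j a k = PiE {..<n} (\<lambda>i. if i = j then {real a / real n ..< (real a + 1) / real n}
                                 else - {(real a + 1) / real n <.. (real a + real k) / real n})"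

lemma sets_above_event: "above_event n k \<in> sets (unif_sample n)"
  unfolding above_event_def unif_sample_def by (rule sets_PiM_I_finite) auto

lemma sets_gap_event: "gap_event n j a k \<in> sets (unif_sample n)"
  unfolding gap_event_def unif_sample_def by (rule sets_PiM_I_finite) auto

lemma measure_above_event:
  assumes "k \<le> n" "1 \<le> n"
  shows "measure (unif_sample n) (above_event n k) = (1 - real k / real n) ^ n"
proof -
  have "{c <..} \<inter> {0..1} = {c <.. 1}" if "0 \<le> c" for c :: real using that by auto
  then have "{real k / real n <..} \<inter> {0..1} = {real k / real n <.. 1}" by simp
  moreover have "real k / real n \<le> 1" using assms by simp
  ultimately show ?thesis unfolding above_event_def by (subst measure_unif_sample_PiE) auto
qed

lemma measure_gap_event:
  assumes "j < n" "1 \<le> k" "a + k < n"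
  shows "measure (unif_sample n) (gap_event n j a k) = 1 / real n * (1 - (real k - 1) / real n) ^ (n - 1)"
proof -
  have np: "0 < real n" using assms by simp
  define A where "A i = (if i = j then {real a / real n ..< (real a + 1) / real n}
                                 else - {(real a + 1) / real n <.. (real a + real k) / real n})" for i
  have cell_le: "(real a + 1) / real n \<le> 1" and hole_le: "(real a + real k) / real n \<le> 1"
    using assms np by (simp_all add: divide_le_eq)
  have "A j \<inter> {0..1} = {real a / real n ..< (real a + 1) / real n}"
    unfolding A_def using cell_le order_trans[of 0 "real a / real n"] by auto
  then have cell: "measure lborel (A j \<inter> {0..1}) = 1 / real n"
    using np by (simp add: divide_right_mono diff_divide_distrib[symmetric])
  have outside: "measure lborel (A i \<inter> {0..1}) = 1 - (real k - 1) / real n" if "i \<noteq> j" for i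
  proof -
    have "{c <.. d} \<subseteq> {0..1}" if "0 \<le> c" "d \<le> 1" for c d :: real using that by auto
    then have sub: "{(real a + 1) / real n <.. (real a + real k) / real n} \<subseteq> {0..1}"
      using hole_le by simp
    have "A i \<inter> {0..1} = {0..1} - {(real a + 1) / real n <.. (real a + real k) / real n}"
      unfolding A_def using that by auto
    then have "measure lborel (A i \<inter> {0..1})
        = 1 - ((real a + real k) / real n - (real a + 1) / real n)"
      using sub assms np by (simp add: measure_Diff divide_right_mono)
    also have "\<dots> = 1 - (real k - 1) / real n" using np by (simp add: field_simps)
    finally show ?thesis .
  qed
  have "measure (unif_sample n) (gap_event n j a k) = (\<Prod>i<n. measure lborel (A i \<inter> {0..1}))"
    unfolding gap_event_def A_def[symmetric] by (rule measure_unif_sample_PiE) (auto simp: A_def)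
  also have "\<dots> = measure lborel (A j \<inter> {0..1}) * (\<Prod>i\<in>{..<n} - {j}. measure lborel (A i \<inter> {0..1}))"
    using assms by (subst prod.remove[of _ j]) auto
  also have "(\<Prod>i\<in>{..<n} - {j}. measure lborel (A i \<inter> {0..1})) = (1 - (real k - 1) / real n) ^ (n - 1)"
    using assms outside by (simp add: card_Diff_singleton)
  finally show ?thesis using cell by simp
qed

lemma above_event_if_ordstat_1:
  assumes "u \<in> space (unif_sample n)" "real k / real n < ordstat n u 1"
  shows "u \<in> above_event n k"
  unfolding above_event_def
proof (rule PiE_I)
  fix i assume "i \<in> {..<n}"
  then show "u i \<in> {real k / real n <..}" using ordstat_1_le_sample[of i n u] assms(2) by simp
next
  fix i assume "i \<notin> {..<n}"
  then show "u i = undefined" using assms(1) by (auto simp: space_unif_sample PiE_def extensional_def)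
qed

lemma gap_event_if_right_gap:
  assumes sp: "u \<in> space (unif_sample n)" and U: "\<forall>i<n. u i \<in> {0..1}"
    and j: "j < n" and k: "1 \<le> k" and gap: "real k / real n < right_gap n u j"
  shows "\<exists>a<n-k. u \<in> gap_event n j a k"
proof -
  have np: "0 < real n" using j by simp
  define a where "a = nat \<lfloor>u j * real n\<rfloor>"
  have "0 \<le> u j * real n" using U j by simp
  then have a_le: "real a \<le> u j * real n" and a_gt: "u j * real n < real a + 1"
    unfolding a_def by linarith+
  then have av: "real a / real n \<le> u j" and va: "u j < (real a + 1) / real n"
    using np by (simp_all add: divide_le_eq less_divide_eq)
  have "real k / real n < 1 - u j"
    using gap right_gap_le[of n u j] by simp
  then have "real a + real k < real n" using a_le np by (simp add: field_simps)
  then have "a < n - k" by linarith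
  moreover have "u \<in> gap_event n j a k"
    unfolding gap_event_def
  proof (rule PiE_I)
    fix i assume i: "i \<in> {..<n}"
    have "\<not> ((real a + 1) / real n < u i \<and> u i \<le> (real a + real k) / real n)"
    proof
      assume c: "(real a + 1) / real n < u i \<and> u i \<le> (real a + real k) / real n"
      then have "right_gap n u j \<le> u i - u j"
        using va i by (intro right_gap_le_gap) auto
      also have "\<dots> \<le> (real a + real k) / real n - real a / real n" using c av by simp
      also have "\<dots> = real k / real n" by (simp add: diff_divide_distrib[symmetric])
      finally show False using gap by simp
    qed
    then show "u i \<in> (if i = j then {real a / real n ..< (real a + 1) / real n}
                        else - {(real a + 1) / real n <.. (real a + real k) / real n})"
      using av va by auto
  next
    fix i assume "i \<notin> {..<n}"
    then show "u i = undefined" using sp by (auto simp: space_unif_sample PiE_def extensional_def)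
  qed
  ultimately show ?thesis by blast
qed

section \<open>A simple majorant of the squared error\<close>

definition sq_error_majorant :: "real \<Rightarrow> nat \<Rightarrow> (nat \<Rightarrow> real) \<Rightarrow> real" where
  "sq_error_majorant B n u = B^2 / 4 * (1 / real n)^5 *
     ((\<Sum>k<n. pow5_increment k * indicator (above_event n k) u)
      + (\<Sum>j<n. 1 + (\<Sum>k\<in>{1..<n}. pow5_increment k * (\<Sum>a<n-k. indicator (gap_event n j a k) u))))"

lemma ordstat_1_pow5_le:
  assumes "u \<in> space (unif_sample n)" "\<forall>i<n. u i \<in> {0..1}" "1 \<le> n"
  shows "ordstat n u 1 ^ 5 \<le> (1 / real n)^5 * (\<Sum>k<n. pow5_increment k * indicator (above_event n k) u)"
proof -
  have "ordstat n u 1 ^ 5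
      \<le> (1 / real n)^5 * (\<Sum>k<n. pow5_increment k * (if real k / real n < ordstat n u 1 then 1 else 0))"
    using ordstat_range[OF assms(2), of 1] assms(3) by (intro pow5_le_sum_increments) auto
  also have "\<dots> \<le> (1 / real n)^5 * (\<Sum>k<n. pow5_increment k * indicator (above_event n k) u)"
    using above_event_if_ordstat_1[OF assms(1)] pow5_increment_nonneg
    by (intro mult_left_mono sum_mono) auto
  finally show ?thesis .
qed

lemma right_gap_pow5_le:
  assumes sp: "u \<in> space (unif_sample n)" and U: "\<forall>i<n. u i \<in> {0..1}" and j: "j < n"
  shows "right_gap n u j ^ 5 \<le>
    (1 / real n)^5 * (1 + (\<Sum>k\<in>{1..<n}. pow5_increment k * (\<Sum>a<n-k. indicator (gap_event n j a k) u)))"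
proof -
  have ind_le: "(if real k / real n < right_gap n u j then 1 else 0)
      \<le> (\<Sum>a<n-k. indicator (gap_event n j a k) u :: real)" if k: "1 \<le> k" for k
  proof (cases "real k / real n < right_gap n u j")
    case True
    then obtain a where "a < n - k" "u \<in> gap_event n j a k"
      using gap_event_if_right_gap[OF sp U j k] by blast
    then show ?thesis
      using True member_le_sum[of a "{..<n-k}" "\<lambda>a. indicator (gap_event n j a k) u :: real"] by simp
  qed (simp add: sum_nonneg)
  let ?I = "\<lambda>k. pow5_increment k * (if real k / real n < right_gap n u j then 1 else 0)"
  have "right_gap n u j ^ 5 \<le> (1 / real n)^5 * (\<Sum>k<n. ?I k)"
    using right_gap_nonneg[OF U j] right_gap_le[of n u j] U j
    by (intro pow5_le_sum_increments) auto
  also have "(\<Sum>k<n. ?I k) = ?I 0 + (\<Sum>k\<in>{1..<n}. ?I k)"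
  proof -
    have "{..<n} = insert 0 {1..<n}" using j by auto
    then show ?thesis by simp
  qed
  also have "\<dots> \<le> 1 + (\<Sum>k\<in>{1..<n}. pow5_increment k * (\<Sum>a<n-k. indicator (gap_event n j a k) u))"
    using ind_le pow5_increment_nonneg by (intro add_mono sum_mono mult_left_mono) auto
  finally show ?thesis by (simp add: mult_left_mono)
qed

lemma (in bounded_second_derivative) sq_error_le_majorant:
  assumes sp: "u \<in> space (unif_sample n)" and U: "\<forall>i<n. u i \<in> {0..1}" and n: "1 \<le> n"
  shows "(integral {0..1} \<Lambda> - Z_QIS \<Lambda> n u)\<^sup>2 \<le> sq_error_majorant B n u"
proof -
  let ?D = "\<lambda>i. ordstat n u i - ordstat n u (i - 1)"
  have mono: "ordstat n u i \<le> ordstat n u j" if "i \<le> j" "j \<le> n + 1" for i j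
    using ordstat_mono[OF U that] .
  have err: "\<bar>integral {0..1} \<Lambda> - Z_QIS \<Lambda> n u\<bar> \<le> B / 2 * (\<Sum>i=1..n+1. ?D i ^ 3)"
    unfolding Z_QIS_def by (rule trapezoid_error_partition[OF _ _ mono]) (simp_all add: ordstat_def)
  have "(\<Sum>i=1..n+1. ?D i ^ 3)^2 \<le> (\<Sum>i=1..n+1. ?D i ^ 5)"
    using mono[of "i - 1" i for i] sum_spacings by (intro sum_cube_squared_le_sum_pow5) auto
  also have "\<dots> \<le> ordstat n u 1 ^ 5 + (\<Sum>j<n. right_gap n u j ^ 5)"
    by (rule sum_spacings_pow5_le[OF U])
  finally have pow5: "(\<Sum>i=1..n+1. ?D i ^ 3)^2 \<le> ordstat n u 1 ^ 5 + (\<Sum>j<n. right_gap n u j ^ 5)" .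
  have "(integral {0..1} \<Lambda> - Z_QIS \<Lambda> n u)\<^sup>2 = \<bar>integral {0..1} \<Lambda> - Z_QIS \<Lambda> n u\<bar>\<^sup>2"
    by simp
  also have "\<dots> \<le> (B / 2 * (\<Sum>i=1..n+1. ?D i ^ 3))\<^sup>2"
    using err by (intro power_mono) auto
  also have "\<dots> = B^2 / 4 * (\<Sum>i=1..n+1. ?D i ^ 3)^2"
    by (simp add: power_mult_distrib power_divide)
  also have "\<dots> \<le> B^2 / 4 * (ordstat n u 1 ^ 5 + (\<Sum>j<n. right_gap n u j ^ 5))"
    using pow5 by (intro mult_left_mono) auto
  also have "\<dots> \<le> B^2 / 4 * ((1 / real n)^5 * (\<Sum>k<n. pow5_increment k * indicator (above_event n k) u)
      + (1 / real n)^5 * (\<Sum>j<n. 1 + (\<Sum>k\<in>{1..<n}. pow5_increment k * (\<Sum>a<n-k. indicator (gap_event n j a k) u))))"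
  proof (intro mult_left_mono add_mono)
    have "(\<Sum>j<n. right_gap n u j ^ 5) \<le> (\<Sum>j<n. (1 / real n)^5 *
        (1 + (\<Sum>k\<in>{1..<n}. pow5_increment k * (\<Sum>a<n-k. indicator (gap_event n j a k) u))))"
      using right_gap_pow5_le[OF sp U] by (intro sum_mono) simp
    then show "(\<Sum>j<n. right_gap n u j ^ 5) \<le> (1 / real n)^5 *
        (\<Sum>j<n. 1 + (\<Sum>k\<in>{1..<n}. pow5_increment k * (\<Sum>a<n-k. indicator (gap_event n j a k) u)))"
      by (simp only: sum_distrib_left)
  qed (use ordstat_1_pow5_le[OF sp U n] in simp_all)
  also have "\<dots> = sq_error_majorant B n u"
    unfolding sq_error_majorant_def by (simp only: distrib_left mult.assoc)
  finally show ?thesis .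
qed

lemma integrable_unif_sample_indicator:
  assumes "A \<in> sets (unif_sample n)"
  shows "integrable (unif_sample n) (indicator A :: _ \<Rightarrow> real)"
proof -
  interpret prob_space "unif_sample n" by (rule prob_space_unif_sample)
  show ?thesis using assms by (intro integrable_real_indicator) (auto simp: less_top[symmetric])
qed

lemma integrable_sq_error_majorant: "integrable (unif_sample n) (sq_error_majorant B n)"
proof -
  interpret prob_space "unif_sample n" by (rule prob_space_unif_sample)
  show ?thesis
    unfolding sq_error_majorant_def
    by (simp add: integrable_unif_sample_indicator sets_above_event sets_gap_event
        del: sum_mult_indicator)
qed

lemma integral_sq_error_majorant:
  "integral\<^sup>L (unif_sample n) (sq_error_majorant B n) = B^2 / 4 * (1 / real n)^5 *
     ((\<Sum>k<n. pow5_increment k * measure (unif_sample n) (above_event n k))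
      + (\<Sum>j<n. 1 + (\<Sum>k\<in>{1..<n}. pow5_increment k * (\<Sum>a<n-k. measure (unif_sample n) (gap_event n j a k)))))"
proof -
  interpret prob_space "unif_sample n" by (rule prob_space_unif_sample)
  show ?thesis
    unfolding sq_error_majorant_def using sets_above_event sets_gap_event
    by (simp add: integrable_unif_sample_indicator Bochner_Integration.integral_sum
        Bochner_Integration.integral_add prob_space del: sum_mult_indicator)
qed

lemma sum_measure_above_event_le:
  assumes "1 \<le> n"
  shows "(\<Sum>k<n. pow5_increment k * measure (unif_sample n) (above_event n k)) \<le> 1 + tail_weight n"
proof -
  have "(1 - real k / real n) ^ n \<le> (1 - (real k - 1) / real n) ^ (n - 1)" if "k \<in> {1..<n}" for k
  proof -
    have "0 \<le> 1 - real k / real n" "1 - real k / real n \<le> 1"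
      using that by (simp_all add: field_simps)
    then have "(1 - real k / real n) ^ n \<le> (1 - real k / real n) ^ (n - 1)"
      by (intro power_decreasing) auto
    also have "\<dots> \<le> (1 - (real k - 1) / real n) ^ (n - 1)"
      using that by (intro power_mono) (simp_all add: field_simps)
    finally show ?thesis .
  qed
  then have "(\<Sum>k\<in>{1..<n}. pow5_increment k * measure (unif_sample n) (above_event n k)) \<le> tail_weight n"
    unfolding tail_weight_def using assms pow5_increment_nonneg
    by (intro sum_mono mult_left_mono) (simp_all add: measure_above_event)
  moreover have "{..<n} = insert 0 {1..<n}" using assms by auto
  ultimately show ?thesis using assms by (simp add: measure_above_event)
qed

lemma sum_measure_gap_event_le:
  assumes "j < n"
  shows "(\<Sum>k\<in>{1..<n}. pow5_increment k * (\<Sum>a<n-k. measure (unif_sample n) (gap_event n j a k)))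
    \<le> tail_weight n"
  unfolding tail_weight_def
proof (intro sum_mono mult_left_mono pow5_increment_nonneg)
  fix k assume k: "k \<in> {1..<n}"
  define q where "q = (1 - (real k - 1) / real n) ^ (n - 1)"
  have "0 \<le> q" unfolding q_def using k by (intro zero_le_power) (auto simp: field_simps)
  have "(\<Sum>a<n-k. measure (unif_sample n) (gap_event n j a k)) = real (n - k) / real n * q"
    unfolding q_def using assms k by (simp add: measure_gap_event)
  also have "\<dots> \<le> q"
    using \<open>0 \<le> q\<close> assms by (intro mult_left_le_one_le) (auto simp: divide_le_eq)
  finally show "(\<Sum>a<n-k. measure (unif_sample n) (gap_event n j a k)) \<le> q" .
qed

lemma integral_sq_error_majorant_le:
  assumes "1 \<le> n"
  shows "integral\<^sup>L (unif_sample n) (sq_error_majorant B n) \<le> B^2 * (1 + tail_weight n) / 2 / real n ^ 4"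
proof -
  have np: "0 < real n" using assms by simp
  have "(\<Sum>j<n. 1 + (\<Sum>k\<in>{1..<n}. pow5_increment k *
      (\<Sum>a<n-k. measure (unif_sample n) (gap_event n j a k)))) \<le> (\<Sum>j<n. 1 + tail_weight n)"
    using sum_measure_gap_event_le by (intro sum_mono) simp
  moreover have "1 + tail_weight n \<le> real n * (1 + tail_weight n)"
    using assms tail_weight_nonneg[of n] by simp
  ultimately have "(\<Sum>k<n. pow5_increment k * measure (unif_sample n) (above_event n k))
      + (\<Sum>j<n. 1 + (\<Sum>k\<in>{1..<n}. pow5_increment k *
        (\<Sum>a<n-k. measure (unif_sample n) (gap_event n j a k)))) \<le> 2 * real n * (1 + tail_weight n)"
    using sum_measure_above_event_le[OF assms] by simp
  then have "integral\<^sup>L (unif_sample n) (sq_error_majorant B n)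
      \<le> B^2 / 4 * (1 / real n)^5 * (2 * real n * (1 + tail_weight n))"
    unfolding integral_sq_error_majorant by (intro mult_left_mono) simp_all
  also have "\<dots> = B^2 * (1 + tail_weight n) / 2 / real n ^ 4"
    using np by (simp add: power_divide field_simps eval_nat_numeral)
  finally show ?thesis .
qed

context bounded_second_derivative
begin

lemma mean_sq_error_le:
  assumes "1 \<le> n"
  shows "(\<integral>u. (integral {0..1} \<Lambda> - Z_QIS \<Lambda> n u)\<^sup>2 \<partial>unif_sample n)
           \<le> B^2 * (1 + tail_weight n) / 2 / real n ^ 4"
proof (rule integral_real_bounded)
  show "0 \<le> B^2 * (1 + tail_weight n) / 2 / real n ^ 4"
    using tail_weight_nonneg[of n] by simp
  have "AE u in unif_sample n.
      ennreal ((integral {0..1} \<Lambda> - Z_QIS \<Lambda> n u)\<^sup>2) \<le> ennreal (sq_error_majorant B n u)"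
    using AE_space AE_unif_sample_01[of n]
  proof eventually_elim
    case (elim u)
    then show ?case by (intro ennreal_leI sq_error_le_majorant assms)
  qed
  then have "(\<integral>\<^sup>+u. ennreal ((integral {0..1} \<Lambda> - Z_QIS \<Lambda> n u)\<^sup>2) \<partial>unif_sample n)
      \<le> (\<integral>\<^sup>+u. ennreal (sq_error_majorant B n u) \<partial>unif_sample n)"
    by (rule nn_integral_mono_AE)
  also have "\<dots> = ennreal (integral\<^sup>L (unif_sample n) (sq_error_majorant B n))"
    using integrable_sq_error_majorant
    by (rule nn_integral_eq_integral) (simp add: sq_error_majorant_def pow5_increment_nonneg sum_nonneg)
  also have "\<dots> \<le> ennreal (B^2 * (1 + tail_weight n) / 2 / real n ^ 4)"
    using integral_sq_error_majorant_le[OF assms] by (rule ennreal_leI)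
  finally show "(\<integral>\<^sup>+u. ennreal ((integral {0..1} \<Lambda> - Z_QIS \<Lambda> n u)\<^sup>2) \<partial>unif_sample n)
      \<le> ennreal (B^2 * (1 + tail_weight n) / 2 / real n ^ 4)" .
qed

end

lemma Z_QIS_between_rectangle_sums:
  fixes \<Lambda> :: "real \<Rightarrow> real"
  assumes nonneg: "\<forall>s\<in>{0..1}. 0 \<le> \<Lambda> s"
    and noninc: "\<forall>s t. 0 \<le> s \<longrightarrow> s \<le> t \<longrightarrow> t \<le> 1 \<longrightarrow> \<Lambda> t \<le> \<Lambda> s"
    and U: "\<forall>i<n. u i \<in> {0..1}"
  shows "(\<Sum>i=1..n. (ordstat n u i - ordstat n u (i - 1)) * \<Lambda> (ordstat n u i)) \<le> Z_QIS \<Lambda> n u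
       \<and> Z_QIS \<Lambda> n u \<le> (\<Sum>i=1..n. (ordstat n u (i + 1) - ordstat n u i) * \<Lambda> (ordstat n u i))
                   + ordstat n u 1 * \<Lambda> 0"
proof -
  let ?y = "ordstat n u"
  let ?D = "\<lambda>i. ?y i - ?y (i - 1)"
  let ?T = "\<lambda>i. ?D i * (\<Lambda> (?y (i - 1)) + \<Lambda> (?y i)) / 2"
  have mono: "?y i \<le> ?y j" if "i \<le> j" "j \<le> n + 1" for i j using ordstat_mono[OF U that] .
  have range: "0 \<le> ?y i \<and> ?y i \<le> 1" if "i \<le> n + 1" for i using ordstat_range[OF U that] .
  have trapezoid: "?D i * \<Lambda> (?y i) \<le> ?T i \<and> ?T i \<le> ?D i * \<Lambda> (?y (i - 1))" if i: "i \<in> {1..n+1}" for i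
  proof -
    have "0 \<le> ?D i" using mono[of "i - 1" i] i by simp
    moreover have "\<Lambda> (?y i) \<le> \<Lambda> (?y (i - 1))"
      using noninc range[of "i - 1"] range[of i] mono[of "i - 1" i] i by auto
    ultimately have "?D i * \<Lambda> (?y i) \<le> ?D i * \<Lambda> (?y (i - 1))" by (rule mult_left_mono[rotated])
    then show ?thesis by (simp add: field_simps)
  qed
  have Z: "Z_QIS \<Lambda> n u = (\<Sum>i=1..n+1. ?T i)"
    unfolding Z_QIS_def by (simp only: sum_divide_distrib[symmetric])
  have "(\<Sum>i=1..n. ?D i * \<Lambda> (?y i)) \<le> (\<Sum>i=1..n+1. ?D i * \<Lambda> (?y i))"
    using mono[of n "n + 1"] nonneg range[of "n + 1"] by simp
  also have "\<dots> \<le> Z_QIS \<Lambda> n u" unfolding Z using trapezoid by (intro sum_mono) blast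
  finally have lower: "(\<Sum>i=1..n. ?D i * \<Lambda> (?y i)) \<le> Z_QIS \<Lambda> n u" .
  have "Z_QIS \<Lambda> n u \<le> (\<Sum>i=1..n+1. ?D i * \<Lambda> (?y (i - 1)))"
    unfolding Z using trapezoid by (intro sum_mono) blast
  also have "\<dots> = ?D 1 * \<Lambda> (?y 0) + (\<Sum>i=Suc 1..Suc n. ?D i * \<Lambda> (?y (i - 1)))"
    by (subst sum.atLeast_Suc_atMost) simp_all
  also have "(\<Sum>i=Suc 1..Suc n. ?D i * \<Lambda> (?y (i - 1))) = (\<Sum>i=1..n. (?y (i + 1) - ?y i) * \<Lambda> (?y i))"
    by (subst sum.shift_bounds_cl_Suc_ivl) simp
  also have "?D 1 * \<Lambda> (?y 0) = ?y 1 * \<Lambda> 0" by (simp add: ordstat_def)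
  finally show ?thesis using lower by simp
qed

theorem lemma2:
  fixes \<Lambda> \<Lambda>' \<Lambda>'' :: "real \<Rightarrow> real" and B :: real
  assumes nonneg: "\<forall>s\<in>{0..1}. 0 \<le> \<Lambda> s"
    and noninc: "\<forall>s t. 0 \<le> s \<longrightarrow> s \<le> t \<longrightarrow> t \<le> 1 \<longrightarrow> \<Lambda> t \<le> \<Lambda> s"
    and d1: "\<forall>s\<in>{0..1}. (\<Lambda> has_real_derivative \<Lambda>' s) (at s within {0..1})"
    and d1_cont: "continuous_on {0..1} \<Lambda>'"
    and d2: "\<forall>s\<in>{0..1}. (\<Lambda>' has_real_derivative \<Lambda>'' s) (at s within {0..1})"
    and d2_bdd: "\<forall>s\<in>{0..1}. \<bar>\<Lambda>'' s\<bar> \<le> B"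
  shows "(\<exists>M. \<forall>n\<ge>1. (\<integral>u. (integral {0..1} \<Lambda> - Z_QIS \<Lambda> n u)\<^sup>2 \<partial>unif_sample n)
                      \<le> M / real n ^ 4)
       \<and> (\<forall>n\<ge>1. AE u in unif_sample n.
              (\<Sum>i=1..n. (ordstat n u i - ordstat n u (i - 1)) * \<Lambda> (ordstat n u i))
                \<le> Z_QIS \<Lambda> n u
            \<and> Z_QIS \<Lambda> n u
                \<le> (\<Sum>i=1..n. (ordstat n u (i + 1) - ordstat n u i) * \<Lambda> (ordstat n u i))
                   + ordstat n u 1 * \<Lambda> 0)"
proof (intro conjI allI impI)
  interpret bounded_second_derivative \<Lambda> \<Lambda>' \<Lambda>'' B
    using d1 d2 d2_bdd by unfold_locales
  obtain K where K: "\<And>n. tail_weight n \<le> K"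
    using tail_weight_bounded by blast
  have "(\<integral>u. (integral {0..1} \<Lambda> - Z_QIS \<Lambda> n u)\<^sup>2 \<partial>unif_sample n) \<le> B^2 * (1 + K) / 2 / real n ^ 4"
    if "1 \<le> n" for n
    using mean_sq_error_le[OF that] K[of n]
    by (elim order_trans) (intro divide_right_mono mult_left_mono; simp)
  then show "\<exists>M. \<forall>n\<ge>1. (\<integral>u. (integral {0..1} \<Lambda> - Z_QIS \<Lambda> n u)\<^sup>2 \<partial>unif_sample n) \<le> M / real n ^ 4"
    by (intro exI[of _ "B^2 * (1 + K) / 2"]) simp
next
  fix n :: nat
  show "AE u in unif_sample n.
          (\<Sum>i=1..n. (ordstat n u i - ordstat n u (i - 1)) * \<Lambda> (ordstat n u i)) \<le> Z_QIS \<Lambda> n u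
        \<and> Z_QIS \<Lambda> n u \<le> (\<Sum>i=1..n. (ordstat n u (i + 1) - ordstat n u i) * \<Lambda> (ordstat n u i))
                         + ordstat n u 1 * \<Lambda> 0"
    using AE_unif_sample_01[of n] by eventually_elim (rule Z_QIS_between_rectangle_sums[OF nonneg noninc])
qed

end
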